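(* Let $P_1, \ldots, P_m$ be independent sub-uniform random variables and let $U_1, \ldots, U_m$ be independent uniform random variables on $[0,1]$. For $x \in [0,1]$, let $q = 1- (1-x)^m = \mathrm{P}\{\min_i U_i \leq x\}$. Then \[\mathrm{P}\{\min_i P_i \leq x\} \leq 1-(1-2x)^m = 1-\{2(1-q)^{1/m}-1\}^m,\] and this bound is no larger than $2q$ and tends to $2q - q^2$ as $m \rightarrow \infty$. Furthermore, this bound is achievable when the $P_i$ are independent and identically distributed.
   Context: A random variable $P$ is called sub-uniform if $P \leq_{cx} U$ with $U$ uniform on $[0,1]$, i.e. $\mathrm{E}\{h(P)\} \leq \mathrm{E}\{h(U)\}$ for every convex function $h$ for which the expectations exist. *)

theory Defs
  imports "HOL-Probability.Probability"
begin

definition pos_exp :: "'a measure \<Rightarrow> ('a \<Rightarrow> real) \<Rightarrow> ereal" where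
  "pos_exp M f = enn2ereal (\<integral>\<^sup>+ w. ennreal (f w) \<partial>M)"

definition neg_exp :: "'a measure \<Rightarrow> ('a \<Rightarrow> real) \<Rightarrow> ereal" where
  "neg_exp M f = enn2ereal (\<integral>\<^sup>+ w. ennreal (- f w) \<partial>M)"

definition exp_exists :: "'a measure \<Rightarrow> ('a \<Rightarrow> real) \<Rightarrow> bool" where
  "exp_exists M f \<longleftrightarrow> \<not> (pos_exp M f = \<infinity> \<and> neg_exp M f = \<infinity>)"

definition ext_expectation :: "'a measure \<Rightarrow> ('a \<Rightarrow> real) \<Rightarrow> ereal" where
  "ext_expectation M f = pos_exp M f - neg_exp M f"

abbreviation unif01 :: "real measure" where
  "unif01 \<equiv> uniform_measure lborel {0..1}"

text \<open>P is sub-uniform: P \<le>cx U with U uniform on [0,1], i.e.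
  E h(P) \<le> E h(U) for every convex h for which the expectations exist.
  (E h(U) always exists, as h is continuous hence bounded on [0,1].)\<close>
definition sub_uniform :: "'a measure \<Rightarrow> ('a \<Rightarrow> real) \<Rightarrow> bool" where
  "sub_uniform M P \<longleftrightarrow> P \<in> borel_measurable M \<and>
     (\<forall>h::real \<Rightarrow> real. convex_on UNIV h \<longrightarrow> exp_exists M (\<lambda>w. h (P w)) \<longrightarrow>
        ext_expectation M (\<lambda>w. h (P w)) \<le> ereal (\<integral>u. h u \<partial>unif01))"

end

theory Submission
  imports Defs "HOL-Real_Asymp.Real_Asymp"
begin

(* For a single sub-uniform P and 0 <= x <= 1/2, the hinge h(p) = max 0 (2x - p) is convex with
   E h(U) = 2x^2 and h >= x on {P <= x}, so Markov's inequality gives P{P <= x} <= 2x; by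
   independence, P{min P_i > x} >= (1 - 2x)^m.  The bound is attained by i.i.d. copies of the
   variable that equals x where U <= 2x and U elsewhere: moving the uniform mass on [0,2x] to its
   barycentre x can only lower convex expectations (Jensen on [0,2x]).  The comparison with 2q is
   the convexity of t^m, and the limit holds because (2 c^(1/m) - 1)^m tends to c^2. *)

lemma integral_reflect_interval:
  fixes h :: "real \<Rightarrow> 'b::real_normed_vector"
  shows "integral {a..b} (\<lambda>u. h (a + b - u)) = integral {a..b} h"
proof -
  have "integral {a..b} (\<lambda>u. h (a + b - u)) = integral {a..b} ((\<lambda>v. h (- v)) \<circ> (+) (- (a + b)))"
    by (simp add: o_def algebra_simps)
  also have "\<dots> = integral {-b..-a} (\<lambda>v. h (- v))"
    by (subst integral_shift_Icc_real) simp
  finally show ?thesis by simp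
qed

lemma convex_midpoint_le_integral:
  fixes h :: "real \<Rightarrow> real"
  assumes conv: "convex_on UNIV h" and "a \<le> b"
  shows "(b - a) * h ((a + b) / 2) \<le> integral {a..b} h"
proof -
  have hc: "continuous_on S h" for S
    using convex_on_continuous[OF open_UNIV conv] continuous_on_subset by blast
  have hr: "continuous_on S (\<lambda>u. h (a + b - u))" for S
    by (intro continuous_on_compose2[OF hc[of UNIV]] continuous_intros) auto
  have mid: "2 * h ((a + b) / 2) \<le> h u + h (a + b - u)" for u
    using convex_onD[OF conv, of "1/2" u "a + b - u"] by (simp add: add_divide_distrib[symmetric])
  have "(b - a) * (2 * h ((a + b) / 2)) = integral {a..b} (\<lambda>_. 2 * h ((a + b) / 2))"
    using assms by simp
  also have "\<dots> \<le> integral {a..b} (\<lambda>u. h u + h (a + b - u))"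
    by (intro integral_le integrable_continuous_real continuous_intros hc hr mid)
  also have "\<dots> = integral {a..b} h + integral {a..b} (\<lambda>u. h (a + b - u))"
    by (intro integral_add integrable_continuous_real hc hr)
  finally show ?thesis by (simp add: integral_reflect_interval)
qed

lemma convex_on_max:
  fixes f g :: "'a::real_vector \<Rightarrow> real"
  assumes f: "convex_on S f" and g: "convex_on S g"
  shows "convex_on S (\<lambda>x. max (f x) (g x))"
proof (rule convex_onI)
  show "convex S"
    using f by (simp add: convex_on_def)
  fix t :: real and x y assume t: "0 < t" "t < 1" and xy: "x \<in> S" "y \<in> S"
  have "f ((1 - t) *\<^sub>R x + t *\<^sub>R y) \<le> (1 - t) * max (f x) (g x) + t * max (f y) (g y)"
    using convex_onD[OF f, of t x y] t xy
    by (smt (verit) max.cobounded1 mult_left_mono)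
  moreover have "g ((1 - t) *\<^sub>R x + t *\<^sub>R y) \<le> (1 - t) * max (f x) (g x) + t * max (f y) (g y)"
    using convex_onD[OF g, of t x y] t xy
    by (smt (verit) max.cobounded2 mult_left_mono)
  ultimately show "max (f ((1 - t) *\<^sub>R x + t *\<^sub>R y)) (g ((1 - t) *\<^sub>R x + t *\<^sub>R y))
      \<le> (1 - t) * max (f x) (g x) + t * max (f y) (g y)"
    by simp
qed

lemma unif01_eq_density: "unif01 = density lborel (\<lambda>u. ennreal (indicator {0..1::real} u))"
  unfolding uniform_measure_def by (simp add: ennreal_indicator divide_ennreal_def)

lemma prob_space_unif01: "prob_space unif01"
  by (rule prob_space_uniform_measure) auto

lemma measure_unif01_greaterThan:
  assumes "0 \<le> x" "x \<le> 1"
  shows "measure unif01 {x<..} = 1 - x"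
proof -
  have "{0..1} \<inter> {x<..} = {x<..1::real}"
    using assms by auto
  then show ?thesis
    using assms by (simp add: measure_uniform_measure)
qed

lemma integral_unif01:
  fixes f :: "real \<Rightarrow> real"
  assumes "f \<in> borel_measurable borel"
  shows "integral\<^sup>L unif01 f = (LINT u:{0..1}|lborel. f u)"
  unfolding unif01_eq_density set_lebesgue_integral_def
  using assms by (subst integral_density) auto

lemma integral_unif01_eq_integral:
  fixes f :: "real \<Rightarrow> real"
  assumes "f \<in> borel_measurable borel" and "set_integrable lborel {0..1} f"
  shows "integral\<^sup>L unif01 f = integral {0..1} f"
  using assms integral_unif01 set_borel_integral_eq_integral(2) by metis

lemma integral_unif01_hinge:
  assumes "0 \<le> a" "a \<le> 1"
  shows "integral\<^sup>L unif01 (\<lambda>u. max 0 (a - u)) = a\<^sup>2 / 2"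
proof -
  let ?f = "\<lambda>u::real. max 0 (a - u)"
  have cont: "continuous_on {0..1} ?f"
    by (intro continuous_intros)
  have "((\<lambda>u. a - u) has_integral (a * a - a\<^sup>2 / 2) - (a * 0 - 0\<^sup>2 / 2)) {0..a}"
    using assms
    by (intro fundamental_theorem_of_calculus[where f="\<lambda>u. a * u - u\<^sup>2 / 2"])
       (auto intro!: derivative_eq_intros simp: has_real_derivative_iff_has_vector_derivative[symmetric])
  then have triangle: "integral {0..a} (\<lambda>u. a - u) = a\<^sup>2 / 2"
    by (simp add: integral_unique power2_eq_square)
  have "integral\<^sup>L unif01 ?f = integral {0..1} ?f"
    by (intro integral_unif01_eq_integral borel_integrable_atLeastAtMost' cont) measurable
  also have "\<dots> = integral {0..a} ?f + integral {a..1} ?f"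
    using assms integrable_continuous_real[OF cont]
    by (intro Henstock_Kurzweil_Integration.integral_combine[symmetric]) auto
  also have "integral {0..a} ?f = integral {0..a} (\<lambda>u. a - u)"
    by (rule integral_cong) auto
  also have "integral {a..1} ?f = 0"
    by (subst integral_cong[where g="\<lambda>_. 0"]) auto
  finally show ?thesis
    by (simp add: triangle)
qed

lemma ext_expectation_nonneg:
  assumes "\<And>w. 0 \<le> f w"
  shows "exp_exists M f" and "ext_expectation M f = enn2ereal (\<integral>\<^sup>+ w. ennreal (f w) \<partial>M)"
proof -
  have "neg_exp M f = 0"
    unfolding neg_exp_def using assms by (simp add: ennreal_neg zero_ennreal.rep_eq)
  then show "exp_exists M f" and "ext_expectation M f = enn2ereal (\<integral>\<^sup>+ w. ennreal (f w) \<partial>M)"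
    by (simp_all add: exp_exists_def ext_expectation_def pos_exp_def)
qed

lemma ext_expectation_integrable:
  assumes "integrable M f"
  shows "ext_expectation M f = ereal (integral\<^sup>L M f)"
proof -
  have pos: "(\<integral>\<^sup>+ w. ennreal (f w) \<partial>M) \<noteq> \<infinity>" and neg: "(\<integral>\<^sup>+ w. ennreal (- f w) \<partial>M) \<noteq> \<infinity>"
    using assms unfolding real_integrable_def by auto
  obtain r where r: "0 \<le> r" "(\<integral>\<^sup>+ w. ennreal (f w) \<partial>M) = ennreal r"
    using pos by (cases "\<integral>\<^sup>+ w. ennreal (f w) \<partial>M") auto
  obtain s where s: "0 \<le> s" "(\<integral>\<^sup>+ w. ennreal (- f w) \<partial>M) = ennreal s"
    using neg by (cases "\<integral>\<^sup>+ w. ennreal (- f w) \<partial>M") auto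
  show ?thesis
    unfolding ext_expectation_def pos_exp_def neg_exp_def real_lebesgue_integral_def[OF assms] r s
    using r s by simp
qed

lemma sub_uniform_nn_integral_le:
  assumes "sub_uniform M P" and "convex_on UNIV h" and "\<And>p. 0 \<le> h p"
  shows "(\<integral>\<^sup>+ w. ennreal (h (P w)) \<partial>M) \<le> ennreal (integral\<^sup>L unif01 h)"
proof -
  have nonneg: "0 \<le> h (P w)" for w
    by (rule assms(3))
  have "ext_expectation M (\<lambda>w. h (P w)) \<le> ereal (integral\<^sup>L unif01 h)"
    using assms(1,2) ext_expectation_nonneg(1)[of "\<lambda>w. h (P w)" M, OF nonneg] unfolding sub_uniform_def by simp
  then have le: "enn2ereal (\<integral>\<^sup>+ w. ennreal (h (P w)) \<partial>M) \<le> ereal (integral\<^sup>L unif01 h)"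
    by (simp only: ext_expectation_nonneg(2)[of "\<lambda>w. h (P w)" M, OF nonneg])
  then have "0 \<le> integral\<^sup>L unif01 h"
    using order.trans[OF enn2ereal_nonneg le] by simp
  then show ?thesis
    using le by (simp add: less_eq_ennreal.rep_eq)
qed

lemma sub_uniform_prob_le_pos:
  assumes "prob_space M" and P: "sub_uniform M P" and x: "0 < x" "x \<le> 1/2"
  shows "measure M {w \<in> space M. P w \<le> x} \<le> 2 * x"
proof -
  interpret prob_space M by fact
  define h where "h = (\<lambda>p. max 0 (2 * x - p))"
  have "convex_on UNIV h"
    unfolding h_def
    by (intro convex_on_max convex_on_diff concave_on_ident[THEN iffD2]
        convex_on_const[THEN iffD2]) simp_all
  then have "(\<integral>\<^sup>+ w. ennreal (h (P w)) \<partial>M) \<le> ennreal (integral\<^sup>L unif01 h)"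
    by (rule sub_uniform_nn_integral_le[OF P]) (simp add: h_def)
  also have "integral\<^sup>L unif01 h = 2 * x\<^sup>2"
    using integral_unif01_hinge[of "2 * x"] x by (simp add: h_def power_mult_distrib)
  finally have hinge_bound: "(\<integral>\<^sup>+ w. ennreal (h (P w)) \<partial>M) \<le> ennreal (2 * x\<^sup>2)" .
  have [measurable]: "P \<in> borel_measurable M"
    using P by (simp add: sub_uniform_def)
  define S where "S = {w \<in> space M. P w \<le> x}"
  have [measurable]: "S \<in> sets M"
    unfolding S_def by measurable
  have "ennreal (x * measure M S) = (\<integral>\<^sup>+ w. ennreal x * indicator S w \<partial>M)"
    using x by (simp add: nn_integral_cmult_indicator emeasure_eq_measure ennreal_mult)
  also have "\<dots> \<le> (\<integral>\<^sup>+ w. ennreal (h (P w)) \<partial>M)"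
    by (intro nn_integral_mono) (auto simp: S_def h_def split: split_indicator intro!: ennreal_leI)
  also note hinge_bound
  finally have "x * measure M S \<le> 2 * x\<^sup>2"
    using x by (simp add: ennreal_le_iff)
  then show ?thesis
    using x unfolding S_def by (simp add: power2_eq_square)
qed

lemma sub_uniform_prob_le:
  assumes M: "prob_space M" and P: "sub_uniform M P" and x: "0 \<le> x" "x \<le> 1/2"
  shows "measure M {w \<in> space M. P w \<le> x} \<le> 2 * x"
proof (cases "x = 0")
  case True
  interpret prob_space M by fact
  have [measurable]: "P \<in> borel_measurable M"
    using P by (simp add: sub_uniform_def)
  have "measure M {w \<in> space M. P w \<le> 0} \<le> e" if "0 < e" for e
  proof -
    define e' where "e' = min (1/2) (e/2)"
    have "measure M {w \<in> space M. P w \<le> 0} \<le> measure M {w \<in> space M. P w \<le> e'}"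
      using that by (intro finite_measure_mono) (auto simp: e'_def)
    also have "\<dots> \<le> 2 * e'"
      using that by (intro sub_uniform_prob_le_pos[OF M P]) (auto simp: e'_def)
    finally show ?thesis
      by (simp add: e'_def)
  qed
  then show ?thesis
    using True by (simp add: field_le_epsilon)
next
  case False
  then show ?thesis
    using sub_uniform_prob_le_pos[OF M P] x by simp
qed

definition collapse_low :: "real \<Rightarrow> real \<Rightarrow> real" where
  "collapse_low x u = (if u \<le> 2 * x then x else u)"

lemma collapse_low_measurable [measurable]: "collapse_low x \<in> borel_measurable borel"
  unfolding collapse_low_def by measurable

lemma integral_unif01_collapse_low:
  fixes h :: "real \<Rightarrow> real"
  assumes conv: "convex_on UNIV h" and x: "0 \<le> x" "x \<le> 1/2"
  shows "integrable unif01 (\<lambda>u. h (collapse_low x u))"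
    and "integral\<^sup>L unif01 (\<lambda>u. h (collapse_low x u)) \<le> integral\<^sup>L unif01 h"
proof -
  interpret prob_space unif01
    by (rule prob_space_unif01)
  have hc: "continuous_on S h" for S
    using convex_on_continuous[OF open_UNIV conv] continuous_on_subset by blast
  have [measurable]: "h \<in> borel_measurable borel"
    by (rule borel_measurable_continuous_onI[OF hc])
  let ?F = "\<lambda>u. h (collapse_low x u)"
  obtain B where B: "\<And>y. y \<in> {0..1} \<Longrightarrow> norm (h y) \<le> B"
    using compact_imp_bounded[OF compact_continuous_image[OF hc compact_Icc]]
    by (meson bounded_iff image_eqI)
  have "collapse_low x u \<in> {0..1}" if "u \<in> {0..1}" for u
    using that x by (auto simp: collapse_low_def)
  then have "AE u in unif01. norm (?F u) \<le> B"
    using B by (intro AE_uniform_measureI) auto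
  then show int: "integrable unif01 ?F"
    by (intro integrable_const_bound[where B=B]) auto
  have si: "set_integrable lborel {0..1} ?F"
    using int unfolding unif01_eq_density set_integrable_def
    by (subst (asm) integrable_density) auto
  have "integral\<^sup>L unif01 ?F = integral {0..1} ?F"
    by (rule integral_unif01_eq_integral[OF _ si]) measurable
  also have "\<dots> = integral {0..2 * x} ?F + integral {2 * x..1} ?F"
    using x set_borel_integral_eq_integral(1)[OF si]
    by (intro Henstock_Kurzweil_Integration.integral_combine[symmetric]) auto
  also have "integral {0..2 * x} ?F = (2 * x - 0) * h ((0 + 2 * x) / 2)"
    using x by (subst integral_cong[where g="\<lambda>_. h x"]) (auto simp: collapse_low_def)
  also have "\<dots> \<le> integral {0..2 * x} h"
    using x by (intro convex_midpoint_le_integral conv) simp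
  also have "integral {2 * x..1} ?F = integral {2 * x..1} h"
    by (rule integral_spike[where S="{2 * x}"]) (auto simp: collapse_low_def)
  also have "integral {0..2 * x} h + integral {2 * x..1} h = integral {0..1} h"
    using x integrable_continuous_real[OF hc]
    by (intro Henstock_Kurzweil_Integration.integral_combine) auto
  also have "\<dots> = integral\<^sup>L unif01 h"
    by (intro integral_unif01_eq_integral[symmetric] borel_integrable_atLeastAtMost' hc) measurable
  finally show "integral\<^sup>L unif01 ?F \<le> integral\<^sup>L unif01 h"
    by simp
qed

lemma sub_uniform_collapse_low:
  assumes V: "V \<in> borel_measurable M" "distr M borel V = unif01" and x: "0 \<le> x" "x \<le> 1/2"
  shows "sub_uniform M (\<lambda>w. collapse_low x (V w))"
  unfolding sub_uniform_def
proof (intro conjI allI impI)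
  show "(\<lambda>w. collapse_low x (V w)) \<in> borel_measurable M"
    using V by measurable
  fix h :: "real \<Rightarrow> real" assume conv: "convex_on UNIV h"
  have [measurable]: "h \<in> borel_measurable borel"
    using convex_on_continuous[OF open_UNIV conv] by (rule borel_measurable_continuous_onI)
  have "integrable (distr M borel V) (\<lambda>u. h (collapse_low x u))"
    using integral_unif01_collapse_low(1)[OF conv x] by (simp only: V(2))
  then have "integrable M (\<lambda>w. h (collapse_low x (V w)))"
    by (rule integrable_distr[OF V(1)])
  moreover have "integral\<^sup>L M (\<lambda>w. h (collapse_low x (V w))) = integral\<^sup>L unif01 (\<lambda>u. h (collapse_low x u))"
  proof -
    have "(\<lambda>u. h (collapse_low x u)) \<in> borel_measurable borel"
      by measurable
    from integral_distr[OF V(1) this] show ?thesis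
      by (simp only: V(2))
  qed
  ultimately show "ext_expectation M (\<lambda>w. h (collapse_low x (V w))) \<le> ereal (integral\<^sup>L unif01 h)"
    using integral_unif01_collapse_low(2)[OF conv x] by (simp add: ext_expectation_integrable)
qed

lemma (in prob_space) prob_Min_le_indep_vars:
  fixes X :: "'i \<Rightarrow> 'a \<Rightarrow> real"
  assumes indep: "indep_vars (\<lambda>_. borel) X I" and I: "finite I" "I \<noteq> {}"
  shows "prob {w \<in> space M. (MIN i\<in>I. X i w) \<le> x} = 1 - (\<Prod>i\<in>I. prob {w \<in> space M. x < X i w})"
proof -
  have [measurable]: "X i \<in> borel_measurable M" if "i \<in> I" for i
    using indep that unfolding indep_vars_def by auto
  let ?A = "\<Inter>i\<in>I. X i -` {x<..} \<inter> space M"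
  have "{w \<in> space M. (MIN i\<in>I. X i w) \<le> x} = space M - ?A"
    using I by (auto simp: Min_le_iff not_less)
  moreover have "?A \<in> events"
    using I by (intro sets.finite_INT) auto
  moreover have "prob ?A = (\<Prod>i\<in>I. prob (X i -` {x<..} \<inter> space M))"
    using I by (intro indep_varsD_finite[OF indep]) auto
  moreover have "X i -` {x<..} \<inter> space M = {w \<in> space M. x < X i w}" for i
    by auto
  ultimately show ?thesis
    by (simp add: prob_compl)
qed

lemma (in prob_space) prob_greater_unif01:
  assumes "X \<in> borel_measurable M" "distr M borel X = unif01" "0 \<le> x" "x \<le> 1"
  shows "prob {w \<in> space M. x < X w} = 1 - x"
proof -
  have "prob {w \<in> space M. x < X w} = measure (distr M borel X) {x<..}"
    using assms(1) by (subst measure_distr) (auto simp: vimage_def Int_def conj_commute)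
  then show ?thesis
    by (simp only: assms(2) measure_unif01_greaterThan[OF assms(3,4)])
qed

lemma (in prob_space) prob_Min_le_unif01:
  assumes indep: "indep_vars (\<lambda>_. borel) U I" and I: "finite I" "I \<noteq> {}"
    and U: "\<And>i. i \<in> I \<Longrightarrow> distr M borel (U i) = unif01" and x: "0 \<le> x" "x \<le> 1"
  shows "prob {w \<in> space M. (MIN i\<in>I. U i w) \<le> x} = 1 - (1 - x) ^ card I"
proof -
  have "prob {w \<in> space M. x < U i w} = 1 - x" if "i \<in> I" for i
    using indep that by (intro prob_greater_unif01 U x) (auto simp: indep_vars_def)
  then show ?thesis
    by (simp add: prob_Min_le_indep_vars[OF indep I])
qed

lemma (in prob_space) prob_Min_le_sub_uniform:
  assumes indep: "indep_vars (\<lambda>_. borel) P I" and I: "finite I" "I \<noteq> {}"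
    and P: "\<And>i. i \<in> I \<Longrightarrow> sub_uniform M (P i)" and x: "0 \<le> x" "x \<le> 1/2"
  shows "prob {w \<in> space M. (MIN i\<in>I. P i w) \<le> x} \<le> 1 - (1 - 2 * x) ^ card I"
proof -
  have "1 - 2 * x \<le> prob {w \<in> space M. x < P i w}" if "i \<in> I" for i
  proof -
    have "P i \<in> borel_measurable M"
      using P[OF that] by (simp add: sub_uniform_def)
    then have "prob {w \<in> space M. x < P i w} = 1 - prob {w \<in> space M. P i w \<le> x}"
      using prob_neg[of "\<lambda>w. P i w \<le> x"] by (simp add: not_le)
    then show ?thesis
      using sub_uniform_prob_le[OF prob_space_axioms P[OF that] x] by simp
  qed
  then have "(\<Prod>i\<in>I. 1 - 2 * x) \<le> (\<Prod>i\<in>I. prob {w \<in> space M. x < P i w})"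
    using x by (intro prod_mono) auto
  then show ?thesis
    by (simp add: prob_Min_le_indep_vars[OF indep I])
qed

lemma indep_vars_PiM_components:
  assumes "I \<noteq> {}" and M: "\<And>i. i \<in> I \<Longrightarrow> prob_space (M i)"
  shows "prob_space.indep_vars (PiM I M) M (\<lambda>i w. w i) I"
proof -
  interpret prob_space "PiM I M"
    using M by (rule prob_space_PiM)
  have "distr (PiM I M) (PiM I M) (\<lambda>w. \<lambda>i\<in>I. w i) = distr (PiM I M) (PiM I M) (\<lambda>w. w)"
    by (intro distr_cong) (auto simp: space_PiM PiE_def extensional_restrict)
  also have "\<dots> = (\<Pi>\<^sub>M i\<in>I. distr (PiM I M) (M i) (\<lambda>w. w i))"
    using M by (simp add: distr_id distr_PiM_component cong: PiM_cong)
  finally show ?thesis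
    using assms(1) by (subst indep_vars_iff_distr_eq_PiM') auto
qed

lemma exists_iid_sub_uniform_Min_attaining:
  assumes m: "m \<ge> 1" and x: "0 \<le> x" "x \<le> 1/2"
  shows "\<exists>(M' :: (nat \<Rightarrow> real) measure) P'. prob_space M'
           \<and> prob_space.indep_vars M' (\<lambda>_. borel) P' {..<m}
           \<and> (\<forall>i<m. sub_uniform M' (P' i))
           \<and> (\<forall>i<m. distr M' borel (P' i) = distr M' borel (P' 0))
           \<and> measure M' {w \<in> space M'. (MIN i\<in>{..<m}. P' i w) \<le> x} = 1 - (1 - 2 * x) ^ m"
proof -
  define Q where "Q = PiM {..<m} (\<lambda>_. unif01)"
  define P' where "P' = (\<lambda>i (w :: nat \<Rightarrow> real). collapse_low x (w i))"
  have ne: "{..<m} \<noteq> {}"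
    using m by (simp add: lessThan_empty_iff)
  have Q: "prob_space Q"
    unfolding Q_def by (intro prob_space_PiM prob_space_unif01)
  interpret prob_space Q
    by (fact Q)
  have coord: "(\<lambda>w. w i) \<in> borel_measurable Q" "distr Q borel (\<lambda>w. w i) = unif01" if "i < m" for i
  proof -
    have "(\<lambda>w. w i) \<in> measurable Q unif01"
      unfolding Q_def using that by (intro measurable_component_singleton) auto
    then show "(\<lambda>w. w i) \<in> borel_measurable Q"
      by (simp cong: measurable_cong_sets)
    have "distr Q borel (\<lambda>w. w i) = distr Q unif01 (\<lambda>w. w i)"
      by (intro distr_cong) auto
    also have "\<dots> = unif01"
      unfolding Q_def using that by (intro distr_PiM_component prob_space_unif01) auto
    finally show "distr Q borel (\<lambda>w. w i) = unif01" .
  qed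
  have "indep_vars (\<lambda>_. unif01) (\<lambda>i w. w i) {..<m}"
    unfolding Q_def using ne by (intro indep_vars_PiM_components prob_space_unif01)
  then have indep: "indep_vars (\<lambda>_. borel) P' {..<m}"
    unfolding P'_def by (rule indep_vars_compose2) simp
  have "distr Q borel (P' i) = distr unif01 borel (collapse_low x)" if "i < m" for i
    using distr_distr[OF collapse_low_measurable[of x] coord(1)[OF that]] coord(2)[OF that]
    by (simp add: P'_def comp_def)
  then have iid: "\<forall>i<m. distr Q borel (P' i) = distr Q borel (P' 0)"
    using m by simp
  have "prob {w \<in> space Q. x < P' i w} = 1 - 2 * x" if "i < m" for i
  proof -
    have "{w \<in> space Q. x < P' i w} = {w \<in> space Q. 2 * x < w i}"
      using x by (auto simp: P'_def collapse_low_def)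
    then show ?thesis
      using prob_greater_unif01[OF coord[OF that]] x by simp
  qed
  then have Min: "prob {w \<in> space Q. (MIN i\<in>{..<m}. P' i w) \<le> x} = 1 - (1 - 2 * x) ^ m"
    unfolding prob_Min_le_indep_vars[OF indep finite_lessThan ne] by simp
  have sub: "\<forall>i<m. sub_uniform Q (P' i)"
  proof (intro allI impI)
    fix i assume "i < m"
    show "sub_uniform Q (P' i)"
      unfolding P'_def by (rule sub_uniform_collapse_low[OF coord[OF \<open>i < m\<close>] x])
  qed
  show ?thesis
    by (intro exI[of _ Q] exI[of _ P'] conjI Q indep sub iid Min)
qed

lemma one_minus_power_le_double:
  fixes x :: real
  assumes "0 \<le> x" "x \<le> 1/2"
  shows "1 - (1 - 2 * x) ^ n \<le> 2 * (1 - (1 - x) ^ n)"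
proof -
  have "2 * (1 - x) ^ n \<le> 1 + (1 - 2 * x) ^ n"
  proof (induction n)
    case 0
    then show ?case by simp
  next
    case (Suc n)
    have "2 * (1 - x) ^ Suc n \<le> (1 + (1 - 2 * x) ^ n) * (1 - x)"
      using Suc assms by (simp add: mult_right_mono)
    also have "\<dots> \<le> 1 + (1 - 2 * x) ^ Suc n"
      using mult_nonneg_nonneg[of "2 * x" "1 - (1 - 2 * x) ^ n"] assms
      by (simp add: power_le_one algebra_simps)
    finally show ?case .
  qed
  then show ?thesis
    by (simp add: algebra_simps)
qed

lemma lim_one_minus_power_two_root:
  fixes q :: real
  assumes "0 \<le> q" "q < 1"
  shows "(\<lambda>n. 1 - (2 * root n (1 - q) - 1) ^ n) \<longlonglongrightarrow> 2 * q - q\<^sup>2"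
proof (cases "q = 0")
  case True
  have "1 - (2 * root n (1 - q) - 1) ^ n = 0" for n
    using True by (cases "n = 0") auto
  then show ?thesis
    using True by simp
next
  case False
  define c where "c = 1 - q"
  have c: "0 < c" "c < 1"
    using assms False by (auto simp: c_def)
  have "(\<lambda>n. 1 - (2 * c powr (1 / real n) - 1) ^ n) \<longlonglongrightarrow> 1 - exp (2 * ln c)"
    using c by real_asymp
  moreover have "exp (2 * ln c) = c\<^sup>2"
    using c by (simp add: exp_of_nat_mult[of 2, simplified] power2_eq_square)
  moreover have "\<forall>\<^sub>F n in sequentially. 1 - (2 * c powr (1 / real n) - 1) ^ n = 1 - (2 * root n c - 1) ^ n"
    using eventually_gt_at_top[of 0] by eventually_elim (use c in \<open>simp add: root_powr_inverse\<close>)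
  ultimately have "(\<lambda>n. 1 - (2 * root n c - 1) ^ n) \<longlonglongrightarrow> 1 - c\<^sup>2"
    using Lim_transform_eventually by fastforce
  moreover have "1 - c\<^sup>2 = 2 * q - q\<^sup>2"
    by (simp add: c_def power2_eq_square algebra_simps)
  ultimately show ?thesis
    by (simp add: c_def)
qed

theorem lemma6:
  fixes M :: "'a measure" and P :: "nat \<Rightarrow> 'a \<Rightarrow> real"
    and N :: "'b measure" and U :: "nat \<Rightarrow> 'b \<Rightarrow> real"
    and m :: nat and x :: real
  assumes M: "prob_space M"
    and P_indep: "prob_space.indep_vars M (\<lambda>_. borel) P {..<m}"
    and P_sub: "\<And>i. i < m \<Longrightarrow> sub_uniform M (P i)"
    and N: "prob_space N"
    and U_indep: "prob_space.indep_vars N (\<lambda>_. borel) U {..<m}"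
    and U_unif: "\<And>i. i < m \<Longrightarrow> distr N borel (U i) = unif01"
    and m: "m \<ge> 1"
    and x: "0 \<le> x" "x \<le> 1/2"
  shows "let q = 1 - (1 - x) ^ m; B = 1 - (1 - 2 * x) ^ m in
           measure N {w \<in> space N. (MIN i\<in>{..<m}. U i w) \<le> x} = q
         \<and> measure M {w \<in> space M. (MIN i\<in>{..<m}. P i w) \<le> x} \<le> B
         \<and> B = 1 - (2 * root m (1 - q) - 1) ^ m
         \<and> B \<le> 2 * q
         \<and> (\<forall>q'. 0 \<le> q' \<and> q' < 1 \<longrightarrow>
              ((\<lambda>n. 1 - (2 * root n (1 - q') - 1) ^ n) \<longlongrightarrow> 2 * q' - q'^2) sequentially)
         \<and> (\<exists>(M' :: (nat \<Rightarrow> real) measure) P'. prob_space M'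
              \<and> prob_space.indep_vars M' (\<lambda>_. borel) P' {..<m}
              \<and> (\<forall>i<m. sub_uniform M' (P' i))
              \<and> (\<forall>i<m. distr M' borel (P' i) = distr M' borel (P' 0))
              \<and> measure M' {w \<in> space M'. (MIN i\<in>{..<m}. P' i w) \<le> x} = B)"
proof -
  have ne: "{..<m} \<noteq> {}"
    using m by (simp add: lessThan_empty_iff)
  have "measure N {w \<in> space N. (MIN i\<in>{..<m}. U i w) \<le> x} = 1 - (1 - x) ^ m"
    using prob_space.prob_Min_le_unif01[OF N U_indep finite_lessThan ne U_unif] x by simp
  moreover have "measure M {w \<in> space M. (MIN i\<in>{..<m}. P i w) \<le> x} \<le> 1 - (1 - 2 * x) ^ m"
    using prob_space.prob_Min_le_sub_uniform[OF M P_indep finite_lessThan ne P_sub x] by simp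
  moreover have "2 * root m (1 - (1 - (1 - x) ^ m)) - 1 = 1 - 2 * x"
    using m x by (simp add: real_root_power_cancel)
  ultimately show ?thesis
    unfolding Let_def
    using one_minus_power_le_double[OF x, of m] lim_one_minus_power_two_root
      exists_iid_sub_uniform_Min_attaining[OF m x]
    by auto
qed

end
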